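(* Let $\mathcal{A}^{(+)}$ be the graded unital associative $\mathbb{C}$-algebra generated by $\nabla_0,\nabla_1,\nabla_2,\nabla_3$ in degree $1$ with relations $[\nabla_0,\nabla_k]=[\nabla_\ell,\nabla_m]$ for every cyclic permutation $(k,\ell,m)$ of $(1,2,3)$. Then $\mathcal{A}^{(+)}$ has exponential growth and is not Gorenstein.
   Context: $\mathcal{A}^{(+)}$ is a quadratic algebra $T(E)/(R)$ with $E=\bigoplus_\lambda\mathbb{C}\nabla_\lambda$; its quadratic dual is $\mathcal{A}^{(+)!}=T(E^* )/(R^\perp)$. Its Koszul complex is the complex of free left modules $\mathcal{A}^{(+)}\otimes(\mathcal{A}^{(+)!}_n)^*$ with differential induced by $a\otimes(e_0\otimes\cdots\otimes e_n)\mapsto ae_0\otimes(e_1\otimes\cdots\otimes e_n)$. If this complex has finite length $D$, $\mathcal{A}^{(+)}$ is called Gorenstein if the cochain complex of right modules obtained by applying $\mathrm{Hom}_{\mathcal{A}^{(+)}}(-,\mathcal{A}^{(+)})$ termwise has cohomology $0$ in degrees $<D$ and isomorphic to the trivial right module $\mathbb{C}$ in degree $D$. Exponential growth means $\dim\mathcal{A}^{(+)}_n$ grows exponentially in $n$. *)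

theory Defs
  imports Complex_Main "HOL-Library.Function_Algebras"
begin

text \<open>Noncommutative polynomials over the complex numbers in the four generators
  nabla_0..nabla_3 (letters 0..3), represented by their coefficient function on words.\<close>

type_synonym ncpoly = "nat list \<Rightarrow> complex"

definition ncp :: "ncpoly set" where
  "ncp = {p. finite {w. p w \<noteq> 0} \<and> (\<forall>w. p w \<noteq> 0 \<longrightarrow> set w \<subseteq> {..<4})}"

definition Thom :: "nat \<Rightarrow> ncpoly set" where
  "Thom n = {p \<in> ncp. \<forall>w. p w \<noteq> 0 \<longrightarrow> length w = n}"

definition ncmul :: "ncpoly \<Rightarrow> ncpoly \<Rightarrow> ncpoly" where
  "ncmul p q = (\<lambda>w. \<Sum>i\<le>length w. p (take i w) * q (drop i w))"

definition mono :: "nat list \<Rightarrow> ncpoly" where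
  "mono u = (\<lambda>w. if w = u then 1 else 0)"

definition gen :: "nat \<Rightarrow> ncpoly" where
  "gen k = mono [k]"

definition scal :: "complex \<Rightarrow> ncpoly \<Rightarrow> ncpoly" where
  "scal c p = (\<lambda>w. c * p w)"

definition ncomm :: "ncpoly \<Rightarrow> ncpoly \<Rightarrow> ncpoly" where
  "ncomm a b = ncmul a b - ncmul b a"

definition cspan :: "ncpoly set \<Rightarrow> ncpoly set" where
  "cspan S = {p. \<exists>B c. finite B \<and> B \<subseteq> S \<and> p = (\<Sum>b\<in>B. scal (c b) b)}"

definition rels :: "ncpoly set" where
  "rels = {ncomm (gen 0) (gen k) - ncomm (gen l) (gen m) | k l m.
            (k, l, m) \<in> {(1,2,3), (2,3,1), (3,1,2)}}"

definition idealA :: "ncpoly set" where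
  "idealA = cspan {ncmul (ncmul (mono u) r) (mono v) | u v r.
                    set u \<subseteq> {..<4} \<and> set v \<subseteq> {..<4} \<and> r \<in> rels}"

definition indep_mod :: "ncpoly set \<Rightarrow> ncpoly set \<Rightarrow> bool" where
  "indep_mod S B = (\<forall>c. (\<Sum>b\<in>B. scal (c b) b) \<in> S \<longrightarrow> (\<forall>b\<in>B. c b = 0))"

definition dimA :: "nat \<Rightarrow> nat" where
  "dimA n = Sup {card B | B. finite B \<and> B \<subseteq> Thom n \<and> indep_mod idealA B}"

definition exponential_growth :: bool where
  "exponential_growth = (\<exists>c::real. c > 1 \<and> (\<exists>N. \<forall>n\<ge>N. c ^ n \<le> real (dimA n)))"

definition sandwich :: "nat \<Rightarrow> nat \<Rightarrow> ncpoly set" where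
  "sandwich i j = cspan {ncmul (ncmul (mono u) r) (mono v) | u v r.
      length u = i \<and> length v = j \<and> set u \<subseteq> {..<4} \<and> set v \<subseteq> {..<4} \<and> r \<in> rels}"

text \<open>kW n = (A^!_n)^*, realised as the subspace intersection of the E^i R E^(n-2-i) in E^{\<otimes>n}.\<close>
definition kW :: "nat \<Rightarrow> ncpoly set" where
  "kW n = {p \<in> Thom n. \<forall>i. i + 2 \<le> n \<longrightarrow> p \<in> sandwich i (n - 2 - i)}"

text \<open>Koszul complex A \<otimes> kW n has finite length D.\<close>
definition koszul_length :: "nat \<Rightarrow> bool" where
  "koszul_length D = (kW D \<noteq> {0} \<and> (\<forall>n>D. kW n = {0}))"

text \<open>Hom_A(A \<otimes> kW n, A) = Hom_C(kW n, A); A-valued maps are represented by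
  T(E)-valued C-linear maps on kW n, taken modulo the ideal.\<close>
definition cochain :: "nat \<Rightarrow> (ncpoly \<Rightarrow> ncpoly) set" where
  "cochain n = {f. (\<forall>x\<in>kW n. f x \<in> ncp) \<and>
     (\<forall>x\<in>kW n. \<forall>y\<in>kW n. f (x + y) = f x + f y) \<and>
     (\<forall>c. \<forall>x\<in>kW n. f (scal c x) = scal c (f x))}"

definition equivC :: "nat \<Rightarrow> (ncpoly \<Rightarrow> ncpoly) \<Rightarrow> (ncpoly \<Rightarrow> ncpoly) \<Rightarrow> bool" where
  "equivC n f g = (\<forall>x\<in>kW n. f x - g x \<in> idealA)"

definition contract :: "nat \<Rightarrow> ncpoly \<Rightarrow> ncpoly" where
  "contract i x = (\<lambda>v. x (i # v))"

text \<open>Dual of the Koszul differential: (delta f)(e_0 \<otimes> w) = e_0 f(w).\<close>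
definition kdelta :: "(ncpoly \<Rightarrow> ncpoly) \<Rightarrow> ncpoly \<Rightarrow> ncpoly" where
  "kdelta f = (\<lambda>x. \<Sum>i<4. ncmul (gen i) (f (contract i x)))"

definition cocycle :: "nat \<Rightarrow> (ncpoly \<Rightarrow> ncpoly) \<Rightarrow> bool" where
  "cocycle n f = equivC (Suc n) (kdelta f) (\<lambda>_. 0)"

definition coboundary :: "nat \<Rightarrow> (ncpoly \<Rightarrow> ncpoly) \<Rightarrow> bool" where
  "coboundary n f = (if n = 0 then equivC 0 f (\<lambda>_. 0)
                     else (\<exists>g\<in>cochain (n - 1). equivC n f (kdelta g)))"

text \<open>The n-th cohomology (a right A-module) is isomorphic to the trivial right module C:
  a C-linear surjection from the cocycles onto C, compatible with the right action
  (a acting on C by its constant term), whose kernel is exactly the coboundaries.\<close>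
definition cohom_iso_trivial :: "nat \<Rightarrow> bool" where
  "cohom_iso_trivial n = (\<exists>\<phi> :: (ncpoly \<Rightarrow> ncpoly) \<Rightarrow> complex.
     (\<forall>f\<in>cochain n. \<forall>g\<in>cochain n. cocycle n f \<longrightarrow> cocycle n g \<longrightarrow>
         \<phi> (\<lambda>x. f x + g x) = \<phi> f + \<phi> g) \<and>
     (\<forall>c. \<forall>f\<in>cochain n. cocycle n f \<longrightarrow> \<phi> (\<lambda>x. scal c (f x)) = c * \<phi> f) \<and>
     (\<forall>f\<in>cochain n. \<forall>g\<in>cochain n. cocycle n f \<longrightarrow> cocycle n g \<longrightarrow>
         equivC n f g \<longrightarrow> \<phi> f = \<phi> g) \<and>
     (\<forall>f\<in>cochain n. cocycle n f \<longrightarrow> (\<phi> f = 0 \<longleftrightarrow> coboundary n f)) \<and>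
     (\<exists>f\<in>cochain n. cocycle n f \<and> \<phi> f = 1) \<and>
     (\<forall>f\<in>cochain n. \<forall>a\<in>ncp. cocycle n f \<longrightarrow>
         \<phi> (\<lambda>x. ncmul (f x) a) = \<phi> f * a []))"

definition gorenstein :: bool where
  "gorenstein = (\<exists>D. koszul_length D \<and>
      (\<forall>k<D. \<forall>f\<in>cochain k. cocycle k f \<longrightarrow> coboundary k f) \<and>
      cohom_iso_trivial D)"

end

(*
  Growth: sending \<nabla>0, \<nabla>1, \<nabla>2, \<nabla>3 to x, y, i x, -i y kills every defining relation,
  so A(+) maps onto the free algebra on x, y and dim A_n >= 2^n.

  Not Gorenstein: an element of (A(+)!_n)^* with n >= 3 lies in R E^(n-2) and in E R E^(n-3),
  so its coefficient of a word abc... is alternating in the letters a, b, c; combined with the relation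
  [\<nabla>0,\<nabla>1] = [\<nabla>2,\<nabla>3] this forces all coefficients to vanish. Hence the Koszul
  complex has length 2 and every 2-cochain is a cocycle. Coboundaries take values without
  constant term, so the coefficient functionals of \<nabla>0\<nabla>1 and \<nabla>0\<nabla>2 give two
  independent classes in H^2, which therefore cannot be the one-dimensional trivial module.
*)
theory Submission
  imports Defs
begin

section \<open>Noncommutative polynomials as a complex vector space\<close>

lemma sum_fun_apply: "(\<Sum>b\<in>B. f b) x = (\<Sum>b\<in>B. f b x)"
  by (induction B rule: infinite_finite_induct) auto

interpretation ncpoly: vector_space "scal :: complex \<Rightarrow> ncpoly \<Rightarrow> ncpoly"
  by unfold_locales (auto simp: scal_def fun_eq_iff algebra_simps)

lemma cspan_eq_span: "cspan S = ncpoly.span S"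
  unfolding cspan_def ncpoly.span_explicit by blast

lemma subspace_coeff_zero: "ncpoly.subspace {p. p w = 0}"
  by (rule ncpoly.subspaceI) (simp_all add: scal_def)

lemma subspace_coeff_pair: "ncpoly.subspace {p. p w1 + p w2 = 0}"
  by (rule ncpoly.subspaceI) (simp_all add: scal_def add.commute add.left_commute flip: distrib_left)

lemma subspace_ncp: "ncpoly.subspace ncp"
proof (rule ncpoly.subspaceI)
  fix p q assume "p \<in> ncp" "q \<in> ncp"
  moreover have "{w. (p + q) w \<noteq> 0} \<subseteq> {w. p w \<noteq> 0} \<union> {w. q w \<noteq> 0}" by auto
  ultimately show "p + q \<in> ncp"
    unfolding ncp_def by (auto intro: finite_subset)
next
  fix c p assume "p \<in> ncp"
  moreover have "{w. scal c p w \<noteq> 0} \<subseteq> {w. p w \<noteq> 0}" by (auto simp: scal_def)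
  ultimately show "scal c p \<in> ncp"
    unfolding ncp_def by (auto intro: finite_subset simp: scal_def)
qed (simp add: ncp_def)

lemma subspace_Thom: "ncpoly.subspace (Thom n)"
proof (rule ncpoly.subspaceI)
  fix p q assume "p \<in> Thom n" "q \<in> Thom n"
  moreover have "p w \<noteq> 0 \<or> q w \<noteq> 0" if "(p + q) w \<noteq> 0" for w
    using that by auto
  ultimately show "p + q \<in> Thom n"
    using ncpoly.subspace_add[OF subspace_ncp] unfolding Thom_def by blast
next
  fix c p assume "p \<in> Thom n"
  then show "scal c p \<in> Thom n"
    using ncpoly.subspace_scale[OF subspace_ncp] unfolding Thom_def by (auto simp: scal_def)
qed (simp add: Thom_def ncpoly.subspace_0[OF subspace_ncp])

lemma mono_apply: "mono u w = (if w = u then 1 else 0)"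
  by (simp add: mono_def)

lemma inj_mono: "inj mono"
  by (rule injI) (metis mono_apply zero_neq_one)

lemma mono_in_Thom: "set w \<subseteq> {..<4} \<Longrightarrow> mono w \<in> Thom (length w)"
  unfolding Thom_def ncp_def by (auto simp: mono_apply)

lemma ncmul_mono_mono: "ncmul (mono a) (mono b) = mono (a @ b)"
proof
  fix w
  have "ncmul (mono a) (mono b) w = (\<Sum>i\<le>length w. if w = a @ b \<and> i = length a then 1 else 0)"
    unfolding ncmul_def mono_def by (intro sum.cong) (auto simp: min_def)
  also have "\<dots> = mono (a @ b) w"
    by (auto simp: mono_def)
  finally show "ncmul (mono a) (mono b) w = mono (a @ b) w" .
qed

lemma ncmul_diff_left: "ncmul (p - q) r = ncmul p r - ncmul q r"
  by (auto simp: ncmul_def fun_eq_iff sum_subtractf left_diff_distrib)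

lemma ncmul_diff_right: "ncmul r (p - q) = ncmul r p - ncmul r q"
  by (auto simp: ncmul_def fun_eq_iff sum_subtractf right_diff_distrib)

abbreviation cyclic_triples :: "(nat \<times> nat \<times> nat) set" where
  "cyclic_triples \<equiv> {(1,2,3), (2,3,1), (3,1,2)}"

definition relator :: "nat \<Rightarrow> nat \<Rightarrow> nat \<Rightarrow> ncpoly" where
  "relator k l m = ncomm (gen 0) (gen k) - ncomm (gen l) (gen m)"

lemma rels_eq: "rels = {relator k l m | k l m. (k, l, m) \<in> cyclic_triples}"
  unfolding rels_def relator_def ..

lemma relator_eq_monomials:
  "relator k l m = mono [0,k] - mono [k,0] - (mono [l,m] - mono [m,l])"
  by (simp add: relator_def ncomm_def gen_def ncmul_mono_mono)

lemma rels_eq_monomials: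
  assumes "r \<in> rels"
  obtains k l m where "(k, l, m) \<in> cyclic_triples"
    and "r = mono [0,k] - mono [k,0] - (mono [l,m] - mono [m,l])"
  using assms unfolding rels_eq relator_eq_monomials by blast

lemma ideal_generator_eq_monomials:
  assumes "r \<in> rels"
  obtains k l m where "(k, l, m) \<in> cyclic_triples"
    and "ncmul (ncmul (mono u) r) (mono v) =
       mono (u @ [0,k] @ v) - mono (u @ [k,0] @ v) - (mono (u @ [l,m] @ v) - mono (u @ [m,l] @ v))"
  using assms by (rule rels_eq_monomials)
    (simp add: ncmul_diff_left ncmul_diff_right ncmul_mono_mono)

lemma mono_at_infix:
  assumes "length t = length u"
  shows "mono (u @ x1 # x2 # v) (t @ y1 # y2 # s) = (if t = u \<and> y1 = x1 \<and> y2 = x2 \<and> s = v then 1 else 0)"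
  using assms by (auto simp: mono_apply)

lemma mono_swap_antisymmetric:
  assumes "length t = length u"
  shows "(mono (u @ [x,y] @ v) - mono (u @ [y,x] @ v)) (t @ [a,b] @ s)
       + (mono (u @ [x,y] @ v) - mono (u @ [y,x] @ v)) (t @ [b,a] @ s) = 0"
  using assms by (simp add: mono_at_infix conj_commute)

lemma ideal_generator_coeffs:
  assumes "(k, l, m) \<in> cyclic_triples" and "length t = length u"
    and g: "g = mono (u @ [0,k] @ v) - mono (u @ [k,0] @ v) - (mono (u @ [l,m] @ v) - mono (u @ [m,l] @ v))"
  shows "g (t @ [a,b] @ s) + g (t @ [b,a] @ s) = 0"
    and "g (t @ [0,1] @ s) + g (t @ [2,3] @ s) = 0"
proof -
  show "g (t @ [a,b] @ s) + g (t @ [b,a] @ s) = 0"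
    using mono_swap_antisymmetric[OF assms(2), of 0 k v a b s] mono_swap_antisymmetric[OF assms(2), of l m v a b s]
    unfolding g fun_diff_def by (simp add: algebra_simps)
  show "g (t @ [0,1] @ s) + g (t @ [2,3] @ s) = 0"
    using assms(1) by (elim insertE emptyE) (simp_all add: g mono_at_infix[OF assms(2)])
qed

section \<open>Exponential growth\<close>

definition words :: "nat \<Rightarrow> nat \<Rightarrow> nat list set" where
  "words k n = {w. set w \<subseteq> {..<k} \<and> length w = n}"

lemma finite_words: "finite (words k n)"
  unfolding words_def by (rule finite_lists_length_eq) simp

lemma card_words: "card (words k n) = k ^ n"
  unfolding words_def by (simp add: card_lists_length_eq)

definition letter_weight :: "nat \<Rightarrow> complex" where
  "letter_weight x = (if x = 2 then \<i> else if x = 3 then - \<i> else 1)"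

definition word_weight :: "nat list \<Rightarrow> complex" where
  "word_weight w = prod_list (map letter_weight w)"

definition squash_word :: "nat list \<Rightarrow> nat list" where
  "squash_word w = map (\<lambda>x. x mod 2) w"

text \<open>The algebra map \<open>\<nabla>0 \<mapsto> x0, \<nabla>1 \<mapsto> x1, \<nabla>2 \<mapsto> i x0, \<nabla>3 \<mapsto> -i x1\<close>
  onto the free algebra on the letters 0, 1, written coefficientwise.\<close>

definition squash :: "ncpoly \<Rightarrow> ncpoly" where
  "squash p = (\<lambda>w. \<Sum>s | set s \<subseteq> {..<4} \<and> squash_word s = w. word_weight s * p s)"

lemma finite_squash_fibre: "finite {s. set s \<subseteq> {..<4} \<and> squash_word s = w}"
  by (rule finite_subset[OF _ finite_words[of 4 "length w"]]) (auto simp: words_def squash_word_def)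

interpretation squash: Vector_Spaces.linear scal scal squash
  by unfold_locales
    (auto simp: squash_def scal_def fun_eq_iff sum.distrib distrib_left sum_distrib_left mult.left_commute)

lemma squash_mono:
  assumes "set s \<subseteq> {..<4}"
  shows "squash (mono s) = scal (word_weight s) (mono (squash_word s))"
proof
  fix w
  have "squash (mono s) w = (\<Sum>x | set x \<subseteq> {..<4} \<and> squash_word x = w. if x = s then word_weight s else 0)"
    unfolding squash_def mono_def by (intro sum.cong) auto
  also have "\<dots> = scal (word_weight s) (mono (squash_word s)) w"
    using assms finite_squash_fibre by (auto simp: sum.delta' scal_def mono_def)
  finally show "squash (mono s) w = scal (word_weight s) (mono (squash_word s)) w" .
qed

lemma squash_ideal_generator:
  assumes "set u \<subseteq> {..<4}" "set v \<subseteq> {..<4}" "r \<in> rels"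
  shows "squash (ncmul (ncmul (mono u) r) (mono v)) = 0"
proof -
  obtain k l m where klm: "(k, l, m) \<in> cyclic_triples" and
    g: "ncmul (ncmul (mono u) r) (mono v) =
       mono (u @ [0,k] @ v) - mono (u @ [k,0] @ v) - (mono (u @ [l,m] @ v) - mono (u @ [m,l] @ v))"
    using assms(3) by (rule ideal_generator_eq_monomials)
  show ?thesis
    using klm assms(1,2)
    by (auto simp: g squash.diff squash_mono word_weight_def squash_word_def letter_weight_def scal_def fun_eq_iff)
qed

lemma squash_idealA: "p \<in> idealA \<Longrightarrow> squash p = 0"
  unfolding idealA_def cspan_eq_span
  by (rule squash.eq_0_on_span) (auto intro: squash_ideal_generator)

lemma squash_binary_mono: "set w \<subseteq> {..<2} \<Longrightarrow> squash (mono w) = mono w"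
proof -
  assume w: "set w \<subseteq> {..<2}"
  then have "word_weight w = 1" and "squash_word w = w"
    unfolding word_weight_def squash_word_def letter_weight_def
    by (induction w) auto
  moreover have "set w \<subseteq> {..<4}"
    using w by auto
  ultimately show ?thesis
    by (simp add: squash_mono scal_def)
qed

lemma indep_mod_binary_monomials: "indep_mod idealA (mono ` words 2 n)"
  unfolding indep_mod_def
proof (intro allI impI ballI)
  fix c b0
  assume "(\<Sum>b\<in>mono ` words 2 n. scal (c b) b) \<in> idealA" and b0: "b0 \<in> mono ` words 2 n"
  then have "0 = squash (\<Sum>b\<in>mono ` words 2 n. scal (c b) b)"
    by (simp add: squash_idealA)
  also have "\<dots> = (\<Sum>b\<in>mono ` words 2 n. scal (c b) b)"
    by (auto simp: squash.sum squash.scale squash_binary_mono words_def intro!: sum.cong)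
  finally have sum_zero: "(\<Sum>b\<in>mono ` words 2 n. scal (c b) b) = 0" ..
  obtain w0 where b0_eq: "b0 = mono w0" using b0 by blast
  have "(\<Sum>b\<in>mono ` words 2 n. scal (c b) b) w0 = (\<Sum>b\<in>mono ` words 2 n. if b = b0 then c b else 0)"
    unfolding sum_fun_apply
    by (intro sum.cong) (auto simp: b0_eq scal_def mono_apply split: if_splits)
  also have "\<dots> = c b0"
    using b0 finite_words by (simp add: sum.delta')
  finally show "c b0 = 0"
    using sum_zero by simp
qed

lemma independent_if_indep_mod:
  assumes "0 \<in> S" "finite B" "indep_mod S B"
  shows "ncpoly.independent B"
  unfolding ncpoly.independent_explicit_finite_subsets
proof (intro allI impI ballI)
  fix T u v
  assume T: "T \<subseteq> B" "finite T" and sum_zero: "(\<Sum>v\<in>T. scal (u v) v) = 0" and v: "v \<in> T"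
  define c where "c b = (if b \<in> T then u b else 0)" for b
  have "(\<Sum>b\<in>B. scal (c b) b) = (\<Sum>b\<in>T. scal (u b) b)"
    using assms(2) T by (intro sum.mono_neutral_cong_right) (auto simp: c_def scal_def fun_eq_iff)
  then have "\<forall>b\<in>B. c b = 0"
    using assms(1,3) sum_zero unfolding indep_mod_def by metis
  then have "c v = 0"
    using T v by blast
  then show "u v = 0"
    using v by (simp add: c_def)
qed

lemma Thom_subset_span_monomials: "Thom n \<subseteq> ncpoly.span (mono ` words 4 n)"
proof
  fix p assume p: "p \<in> Thom n"
  then have fin: "finite {w. p w \<noteq> 0}" and supp: "{w. p w \<noteq> 0} \<subseteq> words 4 n"
    unfolding Thom_def ncp_def words_def by auto
  have "p = (\<Sum>w | p w \<noteq> 0. scal (p w) (mono w))"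
  proof
    fix x
    have "(\<Sum>w | p w \<noteq> 0. scal (p w) (mono w)) x = (\<Sum>w | p w \<noteq> 0. if x = w then p x else 0)"
      unfolding sum_fun_apply by (intro sum.cong) (auto simp: scal_def mono_apply)
    also have "\<dots> = p x"
      using fin by (simp add: sum.delta)
    finally show "p x = (\<Sum>w | p w \<noteq> 0. scal (p w) (mono w)) x" ..
  qed
  also have "\<dots> \<in> ncpoly.span (mono ` words 4 n)"
    using supp by (intro ncpoly.span_sum ncpoly.span_scale ncpoly.span_base) auto
  finally show "p \<in> ncpoly.span (mono ` words 4 n)" .
qed

lemma card_le_if_indep_mod_idealA:
  assumes "finite B" "B \<subseteq> Thom n" "indep_mod idealA B"
  shows "card B \<le> 4 ^ n"
proof -
  have "0 \<in> idealA"
    by (simp add: idealA_def cspan_eq_span ncpoly.span_zero)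
  then have "ncpoly.independent B"
    using independent_if_indep_mod assms(1,3) by blast
  moreover have "B \<subseteq> ncpoly.span (mono ` words 4 n)"
    using Thom_subset_span_monomials assms(2) by blast
  ultimately have "card B \<le> card (mono ` words 4 n)"
    using ncpoly.independent_span_bound[OF finite_imageI[OF finite_words]] by blast
  also have "\<dots> = 4 ^ n"
    using card_image[OF inj_on_subset[OF inj_mono]] card_words by simp
  finally show ?thesis .
qed

lemma dimA_ge: "2 ^ n \<le> dimA n"
proof -
  let ?S = "{card B | B. finite B \<and> B \<subseteq> Thom n \<and> indep_mod idealA B}"
  have "card (mono ` words 2 n) = 2 ^ n"
    using card_image[OF inj_on_subset[OF inj_mono]] card_words by simp
  moreover have "mono ` words 2 n \<subseteq> Thom n"
    using mono_in_Thom by (fastforce simp: words_def)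
  ultimately have "2 ^ n \<in> ?S"
    using finite_imageI[OF finite_words] indep_mod_binary_monomials
    by (intro CollectI exI[of _ "mono ` words 2 n"]) simp
  moreover have "bdd_above ?S"
    by (rule bdd_aboveI[of _ "4 ^ n"]) (auto intro: card_le_if_indep_mod_idealA)
  ultimately show ?thesis
    unfolding dimA_def by (rule cSup_upper)
qed

lemma has_exponential_growth: exponential_growth
  unfolding exponential_growth_def
proof (intro exI conjI allI impI)
  show "(1::real) < 2" by simp
  show "2 ^ n \<le> real (dimA n)" for n
    using dimA_ge[of n, folded of_nat_le_iff[where 'a=real]] by simp
qed

section \<open>The Koszul dual vanishes above degree 2\<close>

lemma sandwich_coeffs:
  assumes p: "p \<in> sandwich i j" and "length t = i" "length s = j"
  shows "p (t @ [a,b] @ s) + p (t @ [b,a] @ s) = 0"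
    and "p (t @ [0,1] @ s) + p (t @ [2,3] @ s) = 0"
proof -
  let ?G = "{ncmul (ncmul (mono u) r) (mono v) | u v r.
      length u = i \<and> length v = j \<and> set u \<subseteq> {..<4} \<and> set v \<subseteq> {..<4} \<and> r \<in> rels}"
  have p: "p \<in> ncpoly.span ?G"
    using p unfolding sandwich_def cspan_eq_span .
  have gen: "g (t @ [a,b] @ s) + g (t @ [b,a] @ s) = 0 \<and> g (t @ [0,1] @ s) + g (t @ [2,3] @ s) = 0"
    if "g \<in> ?G" for g
  proof -
    from that obtain u v r where g: "g = ncmul (ncmul (mono u) r) (mono v)"
      and "length u = i" and r: "r \<in> rels" by blast
    then have len: "length t = length u" using assms by simp
    from r obtain k l m where "(k, l, m) \<in> cyclic_triples" and
      "g = mono (u @ [0,k] @ v) - mono (u @ [k,0] @ v) - (mono (u @ [l,m] @ v) - mono (u @ [m,l] @ v))"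
      unfolding g by (rule ideal_generator_eq_monomials)
    then show ?thesis using ideal_generator_coeffs[OF _ len] by simp
  qed
  show "p (t @ [a,b] @ s) + p (t @ [b,a] @ s) = 0"
    using gen by (intro ncpoly.span_induct[OF p subspace_coeff_pair]) simp
  show "p (t @ [0,1] @ s) + p (t @ [2,3] @ s) = 0"
    using gen by (intro ncpoly.span_induct[OF p subspace_coeff_pair]) simp
qed

lemma alternating_coeffs_vanish:
  fixes q :: "nat \<Rightarrow> nat \<Rightarrow> nat \<Rightarrow> complex"
  assumes swap12: "\<And>a b c. q a b c + q b a c = 0"
    and swap23: "\<And>a b c. q a b c + q a c b = 0"
    and rel: "\<And>c. q 0 1 c + q 2 3 c = 0"
    and "x < 4" "y < 4" "z < 4"
  shows "q x y z = 0"
proof -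
  have s1: "q a b c = - q b a c" if "b < a" for a b c
    using swap12[of a b c] by (simp add: eq_neg_iff_add_eq_0)
  have s2: "q a b c = - q a c b" if "c < b" for a b c
    using swap23[of a b c] by (simp add: eq_neg_iff_add_eq_0)
  have d12: "q a a c = 0" and d23: "q a b b = 0" for a b c
    using swap12[of a a c] swap23[of a b b] by simp_all
  have d13: "q a b a = 0" for a b
    using swap23[of a b a] d12[of a b] by simp
  have "q 0 1 2 = 0" using rel[of 2] d13[of 2 3] by simp
  moreover have "q 0 1 3 = 0" using rel[of 3] d23[of 2 3] by simp
  moreover have "q 0 2 3 = 0"
    using rel[of 0] d13[of 0 1] by (simp add: s1 s2)
  moreover have "q 1 2 3 = 0"
    using rel[of 1] d23[of 0 1] by (simp add: s1 s2)
  moreover have "x \<in> {0,1,2,3}" "y \<in> {0,1,2,3}" "z \<in> {0,1,2,3}"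
    using \<open>x < 4\<close> \<open>y < 4\<close> \<open>z < 4\<close> by auto
  ultimately show ?thesis
    by (elim insertE emptyE) (simp_all add: s1 s2 d12 d23 d13)
qed

lemma zero_in_kW: "0 \<in> kW n"
  using ncpoly.subspace_0[OF subspace_Thom] ncpoly.span_zero
  by (auto simp: kW_def sandwich_def cspan_eq_span)

lemma kW_eq_zero:
  assumes "3 \<le> n"
  shows "kW n = {0}"
proof
  show "{0} \<subseteq> kW n"
    using zero_in_kW by simp
  show "kW n \<subseteq> {0}"
  proof
    fix p assume p: "p \<in> kW n"
    have "p w = 0" for w
    proof (rule ccontr)
      assume "p w \<noteq> 0"
      with p have "length w = n" and w4: "set w \<subseteq> {..<4}"
        unfolding kW_def Thom_def ncp_def by auto
      then obtain x y z s where w: "w = x # y # z # s" and s: "length s = n - 3"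
        using assms by (auto simp: numeral_3_eq_3 Suc_le_length_iff)
      define q where "q a b c = p (a # b # c # s)" for a b c
      have S0: "p \<in> sandwich 0 (n - 2)" and S1: "p \<in> sandwich 1 (n - 3)"
        using p assms unfolding kW_def by (auto simp: numeral_3_eq_3 numeral_2_eq_2)
      have "q x y z = 0"
      proof (rule alternating_coeffs_vanish)
        show "q a b c + q b a c = 0" for a b c
          using sandwich_coeffs(1)[OF S0, of "[]" "c # s" a b] s assms unfolding q_def by simp
        show "q a b c + q a c b = 0" for a b c
          using sandwich_coeffs(1)[OF S1, of "[a]" s b c] s unfolding q_def by simp
        show "q 0 1 c + q 2 3 c = 0" for c
          using sandwich_coeffs(2)[OF S0, of "[]" "c # s"] s assms unfolding q_def by simp
      qed (use w4 w in auto)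
      with \<open>p w \<noteq> 0\<close> show False by (simp add: q_def w)
    qed
    then show "p \<in> {0}" by auto
  qed
qed

lemma rels_subset_kW2: "rels \<subseteq> kW 2"
proof
  fix r assume r: "r \<in> rels"
  then obtain k l m where klm: "(k, l, m) \<in> cyclic_triples"
    and r_eq: "r = mono [0,k] - mono [k,0] - (mono [l,m] - mono [m,l])"
    by (rule rels_eq_monomials)
  have "ncmul (ncmul (mono []) r) (mono []) = r"
    by (simp add: r_eq ncmul_diff_left ncmul_diff_right ncmul_mono_mono)
  then have "r \<in> sandwich 0 0"
    unfolding sandwich_def cspan_eq_span by (intro ncpoly.span_base) (use r in force)
  moreover have "mono [a,b] \<in> Thom 2" if "a < 4" "b < 4" for a b
    using mono_in_Thom[of "[a,b]"] that by (simp add: numeral_2_eq_2)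
  then have "r \<in> Thom 2"
    using klm unfolding r_eq by (auto intro!: ncpoly.subspace_diff[OF subspace_Thom])
  ultimately show "r \<in> kW 2"
    unfolding kW_def by auto
qed

lemma relator_coeff:
  assumes "(k, l, m) \<in> cyclic_triples"
  shows "relator k l m [0,j] = (if j = k then 1 else 0)"
  using assms by (auto simp: relator_eq_monomials mono_apply)

lemma relator_in_kW2: "(k, l, m) \<in> cyclic_triples \<Longrightarrow> relator k l m \<in> kW 2"
  using rels_subset_kW2 unfolding rels_eq by blast

lemma kW2_ne_zero: "kW 2 \<noteq> {0}"
proof -
  have "relator 1 2 3 \<noteq> 0"
    using relator_coeff[of 1 2 3 1] by auto
  then show ?thesis
    using relator_in_kW2[of 1 2 3] by auto
qed

lemma koszul_length_iff: "koszul_length D \<longleftrightarrow> D = 2"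
proof
  assume "koszul_length D"
  then have "kW D \<noteq> {0}" and "\<not> D < 2"
    using kW2_ne_zero unfolding koszul_length_def by auto
  then show "D = 2"
    using kW_eq_zero[of D] by (cases "3 \<le> D") auto
next
  assume "D = 2"
  then show "koszul_length D"
    using kW2_ne_zero kW_eq_zero unfolding koszul_length_def by (auto simp: Suc_le_eq)
qed

section \<open>Cohomology in degree 2\<close>

lemma idealA_const_coeff: "p \<in> idealA \<Longrightarrow> p [] = 0"
  unfolding idealA_def cspan_eq_span
proof (erule ncpoly.span_induct[OF _ subspace_coeff_zero[of "[]"], simplified])
  fix g assume "g \<in> {ncmul (ncmul (mono u) r) (mono v) | u v r.
      set u \<subseteq> {..<4} \<and> set v \<subseteq> {..<4} \<and> r \<in> rels}"
  then obtain u v r where g: "g = ncmul (ncmul (mono u) r) (mono v)" and "r \<in> rels" by blast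
  then obtain k l m where "g =
       mono (u @ [0,k] @ v) - mono (u @ [k,0] @ v) - (mono (u @ [l,m] @ v) - mono (u @ [m,l] @ v))"
    using ideal_generator_eq_monomials by metis
  then show "g [] = 0" by (simp add: mono_apply)
qed

lemma kdelta_const_coeff: "kdelta g x [] = 0"
  by (simp add: kdelta_def sum_fun_apply ncmul_def gen_def mono_apply)

lemma coboundary_const_coeff:
  assumes "coboundary n h" "n \<noteq> 0" "x \<in> kW n"
  shows "h x [] = 0"
proof -
  obtain g where "h x - kdelta g x \<in> idealA"
    using assms unfolding coboundary_def equivC_def by auto
  then show ?thesis
    using idealA_const_coeff kdelta_const_coeff by fastforce
qed

lemma cochain_zero: "f \<in> cochain n \<Longrightarrow> f 0 = 0"
proof -
  assume f: "f \<in> cochain n"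
  have "f (scal 0 0) = scal 0 (f 0)"
    using f zero_in_kW unfolding cochain_def by blast
  then show "f 0 = 0"
    by (simp add: scal_def zero_fun_def)
qed

lemma cocycleI_kW_Suc_zero:
  assumes "kW (Suc n) = {0}" and "f \<in> cochain n"
  shows "cocycle n f"
proof -
  have "contract i 0 = 0" for i
    by (simp add: contract_def zero_fun_def)
  then have "kdelta f 0 = 0"
    using cochain_zero[OF assms(2)] by (simp add: kdelta_def ncmul_def zero_fun_def)
  then show ?thesis
    using assms(1) ncpoly.span_zero
    by (auto simp: cocycle_def equivC_def idealA_def cspan_eq_span)
qed

definition coeff_cochain :: "nat list \<Rightarrow> ncpoly \<Rightarrow> ncpoly" where
  "coeff_cochain w x = scal (x w) (mono [])"

lemma coeff_cochain_in_cochain: "coeff_cochain w \<in> cochain n"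
proof -
  have "mono [] \<in> ncp"
    using mono_in_Thom[of "[]"] by (simp add: Thom_def)
  then show ?thesis
    using ncpoly.subspace_scale[OF subspace_ncp]
    by (auto simp: cochain_def coeff_cochain_def scal_def fun_eq_iff distrib_right)
qed

lemma cochain_add: "f \<in> cochain n \<Longrightarrow> g \<in> cochain n \<Longrightarrow> (\<lambda>x. f x + g x) \<in> cochain n"
  using ncpoly.subspace_add[OF subspace_ncp]
  by (auto simp: cochain_def scal_def fun_eq_iff distrib_left)

lemma cochain_scale: "f \<in> cochain n \<Longrightarrow> (\<lambda>x. scal c (f x)) \<in> cochain n"
  using ncpoly.subspace_scale[OF subspace_ncp]
  by (auto simp: cochain_def scal_def fun_eq_iff mult.left_commute distrib_left)

lemma not_cohom_iso_trivial_2: "\<not> cohom_iso_trivial 2"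
proof
  assume "cohom_iso_trivial 2"
  then obtain \<phi> :: "(ncpoly \<Rightarrow> ncpoly) \<Rightarrow> complex" where
    add: "\<And>f g. f \<in> cochain 2 \<Longrightarrow> g \<in> cochain 2 \<Longrightarrow> cocycle 2 f \<Longrightarrow> cocycle 2 g \<Longrightarrow>
       \<phi> (\<lambda>x. f x + g x) = \<phi> f + \<phi> g" and
    scale: "\<And>c f. f \<in> cochain 2 \<Longrightarrow> cocycle 2 f \<Longrightarrow> \<phi> (\<lambda>x. scal c (f x)) = c * \<phi> f" and
    kernel: "\<And>f. f \<in> cochain 2 \<Longrightarrow> cocycle 2 f \<Longrightarrow> \<phi> f = 0 \<longleftrightarrow> coboundary 2 f"
    unfolding cohom_iso_trivial_def by blast
  have cocycle: "cocycle 2 f" if "f \<in> cochain 2" for f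
    using cocycleI_kW_Suc_zero[OF kW_eq_zero that] by simp
  define f1 where "f1 = coeff_cochain [0,1]"
  define f2 where "f2 = coeff_cochain [0,2]"
  have f1: "f1 \<in> cochain 2" and f2: "f2 \<in> cochain 2"
    unfolding f1_def f2_def by (rule coeff_cochain_in_cochain)+
  \<comment> \<open>the combination of \<open>f1\<close> and \<open>f2\<close> killed by \<open>\<phi>\<close>\<close>
  define h where "h = (\<lambda>x. scal (\<phi> f2) (f1 x) + scal (- \<phi> f1) (f2 x))"
  have h: "h \<in> cochain 2"
    unfolding h_def by (intro cochain_add cochain_scale f1 f2)
  have "\<phi> h = \<phi> (\<lambda>x. scal (\<phi> f2) (f1 x)) + \<phi> (\<lambda>x. scal (- \<phi> f1) (f2 x))"
    unfolding h_def using f1 f2 by (intro add cochain_scale cocycle)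
  also have "\<dots> = \<phi> f2 * \<phi> f1 + - \<phi> f1 * \<phi> f2"
    using f1 f2 by (simp only: scale cocycle)
  finally have "coboundary 2 h"
    using kernel[OF h cocycle[OF h]] by simp
  then have "h (relator 2 3 1) [] = 0"
    by (rule coboundary_const_coeff) (simp_all add: relator_in_kW2)
  then have "\<phi> f1 = 0"
    by (simp add: h_def f1_def f2_def coeff_cochain_def scal_def mono_apply relator_coeff)
  then have "coboundary 2 f1"
    using kernel[OF f1 cocycle[OF f1]] by simp
  then have "f1 (relator 1 2 3) [] = 0"
    by (rule coboundary_const_coeff) (simp_all add: relator_in_kW2)
  then show False
    by (simp add: f1_def coeff_cochain_def scal_def mono_apply relator_coeff)
qed

lemma not_gorenstein: "\<not> gorenstein"
  using not_cohom_iso_trivial_2 by (auto simp: gorenstein_def koszul_length_iff)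

theorem mainTheorem8:
  shows "exponential_growth \<and> \<not> gorenstein"
  using has_exponential_growth not_gorenstein by blast

end
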